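(* Let $q$ be a prime power and $\Gamma\subseteq\mathbb{F}_q^*$ a multiplicative subgroup. Let $h_1,h_2:\mathbb{F}_q\to\mathbb{C}$ be functions supported on $\Gamma$ and let $g:\mathbb{F}_q\to\mathbb{C}$ be an arbitrary function. Then $$\frac1{|\Gamma|}\sum_{\gamma\in\Gamma}\langle\mathrm{T}^g_\Gamma h_1^\gamma,h_2^\gamma\rangle=\sum_{\alpha=1}^{|\Gamma|}c_\alpha(h_1)\overline{c_\alpha(h_2)}\cdot\langle\mathrm{T}^g_\Gamma f_\alpha,f_\alpha\rangle.$$
   Context: $\mathrm{T}^g_\Gamma$ is the matrix indexed by $\Gamma$ with entries $\mathrm{T}^g_\Gamma(x,y)=g(x-y)$ for $x,y\in\Gamma$, and $\langle\mathrm{T}^g_\Gamma a,b\rangle=\sum_{x,y\in\Gamma}g(x-y)a(y)\overline{b(x)}$. For $\gamma\in\mathbb{F}_q^*$, $h^\gamma(x)=h(\gamma x)$. Let $t=|\Gamma|$, $n=(q-1)/t$, $\mathbf g$ a primitive root, $\Gamma=\{\mathbf g^{nl}:0\le l<t\}$; $\chi_\alpha(\mathbf g^{nl})=e^{2\pi i\alpha l/t}$ on $\Gamma$ and $0$ off $\Gamma$, $f_\alpha=|\Gamma|^{-1/2}\chi_\alpha$ ($\alpha\in[t]$), and $c_\alpha(\varphi)=\sum_{x\in\Gamma}\varphi(x)\overline{f_\alpha(x)}$. *)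

theory Defs
  imports "HOL-Analysis.Analysis"
begin

text \<open>The finite field F_q is modelled by a finite field type 'a (q = CARD('a)).\<close>

definition Tform :: "('a::ab_group_add \<Rightarrow> complex) \<Rightarrow> 'a set \<Rightarrow> ('a \<Rightarrow> complex) \<Rightarrow> ('a \<Rightarrow> complex) \<Rightarrow> complex" where
  "Tform g \<Gamma> a b = (\<Sum>x\<in>\<Gamma>. \<Sum>y\<in>\<Gamma>. g (x - y) * a y * cnj (b x))"

definition dil :: "('a::times \<Rightarrow> complex) \<Rightarrow> 'a \<Rightarrow> ('a \<Rightarrow> complex)" where
  "dil h \<gamma> = (\<lambda>x. h (\<gamma> * x))"

definition mult_subgroup :: "'a::field set \<Rightarrow> bool" where
  "mult_subgroup \<Gamma> \<longleftrightarrow> \<Gamma> \<subseteq> - {0} \<and> 1 \<in> \<Gamma> \<and> (\<forall>x\<in>\<Gamma>. \<forall>y\<in>\<Gamma>. x * y \<in> \<Gamma>) \<and> (\<forall>x\<in>\<Gamma>. inverse x \<in> \<Gamma>)"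

definition primitive_root :: "'a::{field,finite} \<Rightarrow> bool" where
  "primitive_root pr \<longleftrightarrow> (\<forall>x. x \<noteq> 0 \<longrightarrow> (\<exists>k::nat. x = pr ^ k))"

definition chi :: "'a::{field,finite} \<Rightarrow> 'a set \<Rightarrow> nat \<Rightarrow> 'a \<Rightarrow> complex" where
  "chi pr \<Gamma> \<alpha> x =
     (if x \<in> \<Gamma> then
        (let t = card \<Gamma>; n = (CARD('a) - 1) div t;
             l = (SOME l::nat. l < t \<and> pr ^ (n * l) = x)
         in exp (2 * of_real pi * \<i> * of_nat \<alpha> * of_nat l / of_nat t))
      else 0)"

definition fchi :: "'a::{field,finite} \<Rightarrow> 'a set \<Rightarrow> nat \<Rightarrow> 'a \<Rightarrow> complex" where
  "fchi pr \<Gamma> \<alpha> x = chi pr \<Gamma> \<alpha> x / of_real (sqrt (real (card \<Gamma>)))"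

definition coef :: "'a::{field,finite} \<Rightarrow> 'a set \<Rightarrow> nat \<Rightarrow> ('a \<Rightarrow> complex) \<Rightarrow> complex" where
  "coef pr \<Gamma> \<alpha> \<phi> = (\<Sum>x\<in>\<Gamma>. \<phi> x * cnj (fchi pr \<Gamma> \<alpha> x))"

end

theory Submission
  imports Defs
begin

text \<open>
  Since \<open>pr\<close> generates \<open>\<F>\<^sub>q\<^sup>*\<close> and \<open>|\<Gamma>|\<close> divides \<open>q - 1\<close> (Lagrange), the subgroup \<open>\<Gamma>\<close> is
  cyclic, generated by \<open>pr\<^sup>n\<close> with \<open>n = (q - 1) / |\<Gamma>|\<close>. Hence the \<open>\<chi>\<^sub>\<alpha>\<close> are the characters of \<open>\<Gamma>\<close>,
  and geometric sums of roots of unity give both orthogonality relations. The dual one yields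
  the expansion \<open>h(\<gamma>y) = \<Sum>\<^sub>\<alpha> c\<^sub>\<alpha>(h) \<chi>\<^sub>\<alpha>(\<gamma>) f\<^sub>\<alpha>(y)\<close> for \<open>\<gamma>, y \<in> \<Gamma>\<close>, so by sesquilinearity each
  \<open>\<langle>T h\<^sub>1\<^sup>\<gamma>, h\<^sub>2\<^sup>\<gamma>\<rangle>\<close> is a double sum over \<open>\<alpha>, \<beta>\<close> weighted by \<open>\<chi>\<^sub>\<alpha>(\<gamma>) \<chi>\<^sub>\<beta>(\<gamma>)\<^sup>*\<close>; averaging over \<open>\<gamma>\<close>
  leaves only the diagonal \<open>\<alpha> = \<beta>\<close> by orthogonality.
\<close>

lemma power_card_eq_one:
  fixes x :: "'a::idom"
  assumes fin: "finite G" and nz: "0 \<notin> G"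
    and closed: "\<And>y z. y \<in> G \<Longrightarrow> z \<in> G \<Longrightarrow> y * z \<in> G" and x: "x \<in> G"
  shows "x ^ card G = 1"
proof -
  have inj: "inj_on ((*) x) G"
    using x nz by (auto simp: inj_on_def)
  have "(*) x ` G = G"
    using fin closed x inj by (intro endo_inj_surj) auto
  then have "(\<Prod>y\<in>G. y) = (\<Prod>y\<in>G. x * y)"
    using prod.reindex[OF inj, of id] by simp
  also have "\<dots> = x ^ card G * (\<Prod>y\<in>G. y)"
    by (simp add: prod.distrib)
  finally show ?thesis
    using fin nz by (auto simp: prod_zero_iff)
qed

lemma primitive_root_power_eq_iff:
  fixes pr :: "'a::{field,finite}"
  assumes prim: "primitive_root pr" and "pr \<noteq> 0"
  shows "pr ^ a = pr ^ b \<longleftrightarrow> a mod (CARD('a) - 1) = b mod (CARD('a) - 1)"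
proof -
  define N where "N = CARD('a) - 1"
  have card_units: "card (- {0::'a}) = N"
    unfolding N_def by (simp add: Compl_eq_Diff_UNIV card_Diff_singleton)
  have "(1::'a) \<in> - {0}"
    by simp
  then have "- {0::'a} \<noteq> {}"
    by blast
  then have "N > 0"
    unfolding card_units[symmetric] by (simp add: card_gt_0_iff)
  have "pr ^ card (- {0::'a}) = 1"
    by (rule power_card_eq_one) (use \<open>pr \<noteq> 0\<close> in auto)
  then have "pr ^ N = 1"
    unfolding card_units .
  have periodic: "pr ^ k = pr ^ (k mod N)" for k
  proof -
    have "pr ^ k = (pr ^ N) ^ (k div N) * pr ^ (k mod N)"
      by (simp flip: power_mult power_add)
    with \<open>pr ^ N = 1\<close> show ?thesis
      by simp
  qed
  have "(\<lambda>k. pr ^ k) ` {..<N} = - {0}"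
  proof
    show "(\<lambda>k. pr ^ k) ` {..<N} \<subseteq> - {0}"
      using \<open>pr \<noteq> 0\<close> by auto
    show "- {0} \<subseteq> (\<lambda>k. pr ^ k) ` {..<N}"
    proof
      fix x :: 'a
      assume "x \<in> - {0}"
      then obtain k where "x = pr ^ k"
        using prim unfolding primitive_root_def by auto
      then have "x = pr ^ (k mod N)"
        using periodic[of k] by simp
      moreover have "k mod N < N"
        using \<open>N > 0\<close> by simp
      ultimately show "x \<in> (\<lambda>k. pr ^ k) ` {..<N}"
        by blast
    qed
  qed
  then have "inj_on (\<lambda>k. pr ^ k) {..<N}"
    by (intro eq_card_imp_inj_on) (simp_all add: card_units)
  then show ?thesis
    using periodic[of a] periodic[of b] \<open>N > 0\<close> unfolding N_def[symmetric]
    by (metis inj_on_eq_iff lessThan_iff mod_less_divisor)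
qed

lemma mult_subgroup_coset_eq:
  fixes \<Gamma> :: "'a::field set"
  assumes sg: "mult_subgroup \<Gamma>" and "x \<noteq> 0" and "z \<in> (*) x ` \<Gamma>"
  shows "(*) z ` \<Gamma> = (*) x ` \<Gamma>"
proof -
  obtain g where g: "g \<in> \<Gamma>" "z = x * g"
    using assms by auto
  have "(*) g ` \<Gamma> = \<Gamma>"
  proof
    show "(*) g ` \<Gamma> \<subseteq> \<Gamma>"
      using sg g unfolding mult_subgroup_def by auto
    show "\<Gamma> \<subseteq> (*) g ` \<Gamma>"
    proof
      fix y
      assume "y \<in> \<Gamma>"
      moreover have "g \<noteq> 0"
        using sg g unfolding mult_subgroup_def by auto
      moreover have "inverse g * y \<in> \<Gamma>"
        using sg g \<open>y \<in> \<Gamma>\<close> unfolding mult_subgroup_def by auto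
      ultimately show "y \<in> (*) g ` \<Gamma>"
        by (intro image_eqI[of _ _ "inverse g * y"]) auto
    qed
  qed
  have "(*) z ` \<Gamma> = (*) x ` ((*) g ` \<Gamma>)"
    unfolding g(2) image_image by (simp add: mult.assoc)
  with \<open>(*) g ` \<Gamma> = \<Gamma>\<close> show ?thesis
    by simp
qed

lemma card_mult_subgroup_dvd:
  fixes \<Gamma> :: "'a::{field,finite} set"
  assumes sg: "mult_subgroup \<Gamma>"
  shows "card \<Gamma> dvd CARD('a) - 1"
proof -
  define C where "C = (\<lambda>x. (*) x ` \<Gamma>) ` (- {0})"
  have "inj_on ((*) x) \<Gamma>" if "x \<noteq> 0" for x :: 'a
    using that by (auto intro: inj_onI)
  then have "card ((*) x ` \<Gamma>) = card \<Gamma>" if "x \<noteq> 0" for x :: 'a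
    using that by (simp add: card_image)
  then have card_coset: "card c = card \<Gamma>" if "c \<in> C" for c
    using that unfolding C_def by auto
  have disjoint: "c1 \<inter> c2 = {}" if "c1 \<in> C" "c2 \<in> C" "c1 \<noteq> c2" for c1 c2
  proof (rule ccontr)
    assume "c1 \<inter> c2 \<noteq> {}"
    then obtain z where "z \<in> c1" "z \<in> c2"
      by blast
    from that obtain x1 x2 where x: "x1 \<noteq> 0" "x2 \<noteq> 0" "c1 = (*) x1 ` \<Gamma>" "c2 = (*) x2 ` \<Gamma>"
      unfolding C_def by blast
    have "(*) z ` \<Gamma> = c1"
      using mult_subgroup_coset_eq[OF sg x(1)] \<open>z \<in> c1\<close> x(3) by simp
    moreover have "(*) z ` \<Gamma> = c2"
      using mult_subgroup_coset_eq[OF sg x(2)] \<open>z \<in> c2\<close> x(4) by simp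
    ultimately show False
      using \<open>c1 \<noteq> c2\<close> by simp
  qed
  have union: "\<Union> C = - {0}"
  proof
    show "\<Union> C \<subseteq> - {0}"
      using sg unfolding C_def mult_subgroup_def by auto
    show "- {0} \<subseteq> \<Union> C"
    proof
      fix x :: 'a
      assume "x \<in> - {0}"
      moreover have "x \<in> (*) x ` \<Gamma>"
        using sg unfolding mult_subgroup_def by (auto intro: image_eqI[of _ _ 1])
      ultimately show "x \<in> \<Union> C"
        unfolding C_def by blast
    qed
  qed
  have "card \<Gamma> * card C = card (\<Union> C)"
    by (rule card_partition) (use card_coset disjoint in auto)
  also have "\<dots> = CARD('a) - 1"
    unfolding union
    by (simp add: Compl_eq_Diff_UNIV card_Diff_singleton)
  finally show ?thesis
    by (metis dvd_triv_left)
qed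

lemma mult_subgroup_primitive_root_zero:
  fixes \<Gamma> :: "'a::{field,finite} set"
  assumes sg: "mult_subgroup \<Gamma>" and prim: "primitive_root (0::'a)"
  shows "\<Gamma> = {1}"
proof
  show "\<Gamma> \<subseteq> {1}"
  proof
    fix x
    assume "x \<in> \<Gamma>"
    then have "x \<noteq> 0"
      using sg unfolding mult_subgroup_def by auto
    moreover obtain k where "x = 0 ^ k"
      using prim \<open>x \<noteq> 0\<close> unfolding primitive_root_def by auto
    ultimately show "x \<in> {1}"
      by (cases k) auto
  qed
  show "{1} \<subseteq> \<Gamma>"
    using sg unfolding mult_subgroup_def by auto
qed

lemma mult_subgroup_subset_powers:
  fixes \<Gamma> :: "'a::{field,finite} set"
  assumes sg: "mult_subgroup \<Gamma>" and prim: "primitive_root pr" and "pr \<noteq> 0"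
  defines "n \<equiv> (CARD('a) - 1) div card \<Gamma>"
  shows "\<Gamma> \<subseteq> (\<lambda>l. pr ^ (n * l)) ` {..<card \<Gamma>}"
    and "pr ^ (n * l) = pr ^ (n * (l mod card \<Gamma>))"
proof -
  define t where "t = card \<Gamma>"
  have nonzero: "x \<noteq> 0" if "x \<in> \<Gamma>" for x
    using sg that unfolding mult_subgroup_def by auto
  have closed: "x * y \<in> \<Gamma>" if "x \<in> \<Gamma>" "y \<in> \<Gamma>" for x y
    using sg that unfolding mult_subgroup_def by auto
  have "1 \<in> \<Gamma>"
    using sg unfolding mult_subgroup_def by auto
  then have "t > 0"
    unfolding t_def by (auto simp: card_gt_0_iff)
  have "CARD('a) - 1 = n * t"
    using card_mult_subgroup_dvd[OF sg] unfolding n_def t_def by simp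
  then have power_eq_iff: "pr ^ a = pr ^ b \<longleftrightarrow> a mod (n * t) = b mod (n * t)" for a b
    using primitive_root_power_eq_iff[OF prim \<open>pr \<noteq> 0\<close>] by simp
  show periodic: "pr ^ (n * l) = pr ^ (n * (l mod card \<Gamma>))" for l
    unfolding power_eq_iff t_def by (simp add: mod_mult_mult1)
  show "\<Gamma> \<subseteq> (\<lambda>l. pr ^ (n * l)) ` {..<card \<Gamma>}"
  proof
    fix x
    assume "x \<in> \<Gamma>"
    obtain k where k: "x = pr ^ k"
      using prim nonzero[OF \<open>x \<in> \<Gamma>\<close>] unfolding primitive_root_def by auto
    have "x ^ t = 1"
      unfolding t_def by (rule power_card_eq_one) (use \<open>x \<in> \<Gamma>\<close> nonzero closed in auto)
    then have "pr ^ (k * t) = pr ^ 0"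
      unfolding k by (simp add: power_mult)
    then have "n * t dvd k * t"
      unfolding power_eq_iff by (simp add: mod_eq_0_iff_dvd)
    then obtain j where "k = n * j"
      using \<open>t > 0\<close> by (auto elim: dvdE)
    then have "x = pr ^ (n * (j mod card \<Gamma>))"
      using k periodic[of j] by simp
    then show "x \<in> (\<lambda>l. pr ^ (n * l)) ` {..<card \<Gamma>}"
      using \<open>t > 0\<close> unfolding t_def by auto
  qed
qed

lemma mult_subgroup_eq_powers:
  fixes \<Gamma> :: "'a::{field,finite} set"
  assumes sg: "mult_subgroup \<Gamma>" and prim: "primitive_root pr"
  defines "n \<equiv> (CARD('a) - 1) div card \<Gamma>"
  shows "bij_betw (\<lambda>l. pr ^ (n * l)) {..<card \<Gamma>} \<Gamma>"
    and "l < card \<Gamma> \<Longrightarrow> m < card \<Gamma> \<Longrightarrow> pr ^ (n * l) * pr ^ (n * m) = pr ^ (n * ((l + m) mod card \<Gamma>))"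
proof -
  have "bij_betw (\<lambda>l. pr ^ (n * l)) {..<card \<Gamma>} \<Gamma> \<and>
    (\<forall>l < card \<Gamma>. \<forall>m < card \<Gamma>. pr ^ (n * l) * pr ^ (n * m) = pr ^ (n * ((l + m) mod card \<Gamma>)))"
  proof (cases "pr = 0")
    case True
    then have "\<Gamma> = {1}"
      using mult_subgroup_primitive_root_zero sg prim by blast
    then show ?thesis
      by (simp add: bij_betw_def lessThan_Suc)
  next
    case False
    note powers = mult_subgroup_subset_powers[OF sg prim False, folded n_def]
    have "card ((\<lambda>l. pr ^ (n * l)) ` {..<card \<Gamma>}) \<le> card \<Gamma>"
      using card_image_le[of "{..<card \<Gamma>}"] by simp
    then have image: "(\<lambda>l. pr ^ (n * l)) ` {..<card \<Gamma>} = \<Gamma>"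
      using powers(1) by (intro card_seteq[symmetric]) simp_all
    then have "inj_on (\<lambda>l. pr ^ (n * l)) {..<card \<Gamma>}"
      by (intro eq_card_imp_inj_on) simp_all
    moreover have "pr ^ (n * l) * pr ^ (n * m) = pr ^ (n * ((l + m) mod card \<Gamma>))" for l m
      by (metis powers(2) power_add distrib_left)
    ultimately show ?thesis
      using image by (simp add: bij_betw_def)
  qed
  then show "bij_betw (\<lambda>l. pr ^ (n * l)) {..<card \<Gamma>} \<Gamma>"
    and "l < card \<Gamma> \<Longrightarrow> m < card \<Gamma> \<Longrightarrow> pr ^ (n * l) * pr ^ (n * m) = pr ^ (n * ((l + m) mod card \<Gamma>))"
    by auto
qed

definition root_of_unity :: "nat \<Rightarrow> nat \<Rightarrow> complex" where
  "root_of_unity t j = exp (2 * of_real pi * \<i> * of_nat j / of_nat t)"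

lemma root_of_unity_eq_iff:
  assumes "t > 0"
  shows "root_of_unity t a = root_of_unity t b \<longleftrightarrow> a mod t = b mod t"
  unfolding root_of_unity_def using assms by (simp add: complex_root_unity_eq)

lemma root_of_unity_power_eq_one: "t > 0 \<Longrightarrow> root_of_unity t a ^ t = 1"
  unfolding root_of_unity_def by (rule complex_root_unity) simp

lemma root_of_unity_add: "root_of_unity t (a + b) = root_of_unity t a * root_of_unity t b"
  unfolding root_of_unity_def by (simp add: add_divide_distrib distrib_left flip: exp_add)

lemma root_of_unity_mult: "root_of_unity t (a * b) = root_of_unity t a ^ b"
  unfolding root_of_unity_def by (simp flip: exp_of_nat_mult) (simp add: mult_ac)

lemma cnj_root_of_unity: "cnj (root_of_unity t a) = inverse (root_of_unity t a)"
  unfolding root_of_unity_def by (simp add: exp_cnj flip: exp_minus)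

lemma sum_powers_root_of_unity:
  fixes z :: "'a::field"
  assumes "z ^ t = 1"
  shows "(\<Sum>l<t. z ^ l) = (if z = 1 then of_nat t else 0)"
    and "(\<Sum>l=1..t. z ^ l) = (if z = 1 then of_nat t else 0)"
proof -
  show lessThan: "(\<Sum>l<t. z ^ l) = (if z = 1 then of_nat t else 0)"
    using assms by (simp add: sum_gp_strict)
  have "(\<Sum>l=1..t. z ^ l) = z * (\<Sum>l<t. z ^ l)"
    by (simp add: sum.atLeast1_atMost_eq sum_distrib_left)
  then show "(\<Sum>l=1..t. z ^ l) = (if z = 1 then of_nat t else 0)"
    using lessThan by simp
qed

lemma root_of_unity_orthogonal:
  assumes "t > 0"
  shows "(\<Sum>l<t. root_of_unity t (a * l) * cnj (root_of_unity t (b * l)))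
      = (if a mod t = b mod t then of_nat t else 0)"
    and "(\<Sum>l=1..t. root_of_unity t (l * a) * cnj (root_of_unity t (l * b)))
      = (if a mod t = b mod t then of_nat t else 0)"
proof -
  define z where "z = root_of_unity t a / root_of_unity t b"
  have summand: "root_of_unity t (a * l) * cnj (root_of_unity t (b * l)) = z ^ l" for l
    unfolding z_def root_of_unity_mult
    by (simp add: cnj_root_of_unity divide_inverse power_mult_distrib)
  have "z ^ t = 1"
    unfolding z_def power_divide using root_of_unity_power_eq_one[OF assms] by simp
  note sums = sum_powers_root_of_unity[OF this]
  have "z = 1 \<longleftrightarrow> a mod t = b mod t"
    unfolding z_def root_of_unity_eq_iff[OF assms, symmetric]
    by (simp add: root_of_unity_def)
  then show "(\<Sum>l<t. root_of_unity t (a * l) * cnj (root_of_unity t (b * l)))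
      = (if a mod t = b mod t then of_nat t else 0)"
    and "(\<Sum>l=1..t. root_of_unity t (l * a) * cnj (root_of_unity t (l * b)))
      = (if a mod t = b mod t then of_nat t else 0)"
    using sums by (simp_all add: summand mult.commute[of _ a] mult.commute[of _ b])
qed

lemma chi_power:
  fixes \<Gamma> :: "'a::{field,finite} set"
  assumes sg: "mult_subgroup \<Gamma>" and prim: "primitive_root pr" and "l < card \<Gamma>"
  defines "n \<equiv> (CARD('a) - 1) div card \<Gamma>"
  shows "chi pr \<Gamma> \<alpha> (pr ^ (n * l)) = root_of_unity (card \<Gamma>) (\<alpha> * l)"
proof -
  note powers = mult_subgroup_eq_powers(1)[OF sg prim, folded n_def]
  have "pr ^ (n * l) \<in> \<Gamma>"
    using bij_betwE[OF powers] \<open>l < card \<Gamma>\<close> by simp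
  moreover have "(SOME l'. l' < card \<Gamma> \<and> pr ^ (n * l') = pr ^ (n * l)) = l"
    using bij_betw_imp_inj_on[OF powers] \<open>l < card \<Gamma>\<close>
    by (intro some_equality) (auto simp: inj_on_def)
  ultimately show ?thesis
    unfolding chi_def root_of_unity_def Let_def n_def by (simp add: mult.assoc)
qed

lemma mult_subgroup_obtain_power:
  fixes \<Gamma> :: "'a::{field,finite} set"
  assumes sg: "mult_subgroup \<Gamma>" and prim: "primitive_root pr" and "x \<in> \<Gamma>"
  obtains l where "l < card \<Gamma>" "x = pr ^ ((CARD('a) - 1) div card \<Gamma> * l)"
proof -
  have "x \<in> (\<lambda>l. pr ^ ((CARD('a) - 1) div card \<Gamma> * l)) ` {..<card \<Gamma>}"
    using bij_betw_imp_surj_on[OF mult_subgroup_eq_powers(1)[OF sg prim]] \<open>x \<in> \<Gamma>\<close> by simp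
  then show ?thesis
    using that by auto
qed

lemma chi_mult:
  fixes \<Gamma> :: "'a::{field,finite} set"
  assumes sg: "mult_subgroup \<Gamma>" and prim: "primitive_root pr" and "x \<in> \<Gamma>" "y \<in> \<Gamma>"
  shows "chi pr \<Gamma> \<alpha> (x * y) = chi pr \<Gamma> \<alpha> x * chi pr \<Gamma> \<alpha> y"
proof -
  define t where "t = card \<Gamma>"
  define n where "n = (CARD('a) - 1) div card \<Gamma>"
  obtain l where l: "l < t" "x = pr ^ (n * l)"
    using mult_subgroup_obtain_power[OF sg prim \<open>x \<in> \<Gamma>\<close>] unfolding t_def n_def .
  obtain m where m: "m < t" "y = pr ^ (n * m)"
    using mult_subgroup_obtain_power[OF sg prim \<open>y \<in> \<Gamma>\<close>] unfolding t_def n_def .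
  from l have "t > 0"
    by simp
  have "x * y = pr ^ (n * ((l + m) mod t))"
    using mult_subgroup_eq_powers(2)[OF sg prim] l m unfolding t_def n_def by simp
  then have "chi pr \<Gamma> \<alpha> (x * y) = root_of_unity t (\<alpha> * ((l + m) mod t))"
    using chi_power[OF sg prim] \<open>t > 0\<close> unfolding t_def n_def by simp
  also have "\<dots> = root_of_unity t (\<alpha> * (l + m))"
    using \<open>t > 0\<close> by (simp add: root_of_unity_eq_iff mod_mult_right_eq)
  also have "\<dots> = chi pr \<Gamma> \<alpha> x * chi pr \<Gamma> \<alpha> y"
    using chi_power[OF sg prim] l m unfolding t_def n_def by (simp add: distrib_left root_of_unity_add)
  finally show ?thesis .
qed

lemma mod_eq_iff_in_atLeastAtMost:
  fixes a b t :: nat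
  assumes "a \<in> {1..t}" "b \<in> {1..t}"
  shows "a mod t = b mod t \<longleftrightarrow> a = b"
proof
  assume "a mod t = b mod t"
  with assms show "a = b"
    by (cases "a = t"; cases "b = t") (auto simp: mod_if split: if_splits)
qed simp

lemma chi_orthogonal:
  fixes \<Gamma> :: "'a::{field,finite} set"
  assumes sg: "mult_subgroup \<Gamma>" and prim: "primitive_root pr"
    and "\<alpha> \<in> {1..card \<Gamma>}" "\<beta> \<in> {1..card \<Gamma>}"
  shows "(\<Sum>\<gamma>\<in>\<Gamma>. chi pr \<Gamma> \<alpha> \<gamma> * cnj (chi pr \<Gamma> \<beta> \<gamma>)) = (if \<alpha> = \<beta> then of_nat (card \<Gamma>) else 0)"
proof -
  define t where "t = card \<Gamma>"
  define n where "n = (CARD('a) - 1) div card \<Gamma>"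
  have "t > 0"
    using assms(3) unfolding t_def by simp
  have "(\<Sum>\<gamma>\<in>\<Gamma>. chi pr \<Gamma> \<alpha> \<gamma> * cnj (chi pr \<Gamma> \<beta> \<gamma>))
      = (\<Sum>l<t. chi pr \<Gamma> \<alpha> (pr ^ (n * l)) * cnj (chi pr \<Gamma> \<beta> (pr ^ (n * l))))"
    using mult_subgroup_eq_powers(1)[OF sg prim] unfolding t_def n_def
    by (rule sum.reindex_bij_betw[symmetric])
  also have "\<dots> = (\<Sum>l<t. root_of_unity t (\<alpha> * l) * cnj (root_of_unity t (\<beta> * l)))"
    using chi_power[OF sg prim] unfolding t_def n_def by simp
  also have "\<dots> = (if \<alpha> = \<beta> then of_nat t else 0)"
    using root_of_unity_orthogonal(1)[OF \<open>t > 0\<close>] mod_eq_iff_in_atLeastAtMost assms(3,4)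
    unfolding t_def by simp
  finally show ?thesis
    unfolding t_def .
qed

lemma chi_dual_orthogonal:
  fixes \<Gamma> :: "'a::{field,finite} set"
  assumes sg: "mult_subgroup \<Gamma>" and prim: "primitive_root pr" and "x \<in> \<Gamma>" "y \<in> \<Gamma>"
  shows "(\<Sum>\<alpha>=1..card \<Gamma>. chi pr \<Gamma> \<alpha> x * cnj (chi pr \<Gamma> \<alpha> y)) = (if x = y then of_nat (card \<Gamma>) else 0)"
proof -
  define t where "t = card \<Gamma>"
  define n where "n = (CARD('a) - 1) div card \<Gamma>"
  obtain l where l: "l < t" "x = pr ^ (n * l)"
    using mult_subgroup_obtain_power[OF sg prim \<open>x \<in> \<Gamma>\<close>] unfolding t_def n_def .
  obtain m where m: "m < t" "y = pr ^ (n * m)"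
    using mult_subgroup_obtain_power[OF sg prim \<open>y \<in> \<Gamma>\<close>] unfolding t_def n_def .
  have "x = y \<longleftrightarrow> l = m"
    using bij_betw_imp_inj_on[OF mult_subgroup_eq_powers(1)[OF sg prim]] l m
    unfolding t_def n_def by (auto simp: inj_on_def)
  moreover have "(\<Sum>\<alpha>=1..t. chi pr \<Gamma> \<alpha> x * cnj (chi pr \<Gamma> \<alpha> y))
      = (\<Sum>\<alpha>=1..t. root_of_unity t (\<alpha> * l) * cnj (root_of_unity t (\<alpha> * m)))"
    using chi_power[OF sg prim] l m unfolding t_def n_def by simp
  ultimately show ?thesis
    using root_of_unity_orthogonal(2)[of t l m] l m unfolding t_def by simp
qed

lemma coef_mult_fchi:
  "coef pr \<Gamma> \<alpha> h * fchi pr \<Gamma> \<alpha> z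
     = (\<Sum>x\<in>\<Gamma>. h x * (chi pr \<Gamma> \<alpha> z * cnj (chi pr \<Gamma> \<alpha> x))) / of_nat (card \<Gamma>)"
proof -
  define s :: complex where "s = of_real (sqrt (real (card \<Gamma>)))"
  have "s * s = of_nat (card \<Gamma>)"
    unfolding s_def by (simp flip: of_real_mult)
  have "coef pr \<Gamma> \<alpha> h * fchi pr \<Gamma> \<alpha> z
      = (\<Sum>x\<in>\<Gamma>. h x * cnj (chi pr \<Gamma> \<alpha> x)) / s * (chi pr \<Gamma> \<alpha> z / s)"
    unfolding coef_def fchi_def s_def[symmetric] by (simp add: s_def sum_divide_distrib)
  also have "\<dots> = (\<Sum>x\<in>\<Gamma>. h x * cnj (chi pr \<Gamma> \<alpha> x)) * chi pr \<Gamma> \<alpha> z / (s * s)"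
    by simp
  finally show ?thesis
    unfolding \<open>s * s = of_nat (card \<Gamma>)\<close> by (simp add: sum_distrib_left sum_divide_distrib mult_ac)
qed

lemma fourier_expansion:
  fixes \<Gamma> :: "'a::{field,finite} set"
  assumes sg: "mult_subgroup \<Gamma>" and prim: "primitive_root pr" and "z \<in> \<Gamma>"
  shows "h z = (\<Sum>\<alpha>=1..card \<Gamma>. coef pr \<Gamma> \<alpha> h * fchi pr \<Gamma> \<alpha> z)"
proof -
  have "card \<Gamma> > 0"
    using \<open>z \<in> \<Gamma>\<close> by (auto simp: card_gt_0_iff)
  have "(\<Sum>\<alpha>=1..card \<Gamma>. coef pr \<Gamma> \<alpha> h * fchi pr \<Gamma> \<alpha> z)
      = (\<Sum>x\<in>\<Gamma>. h x * (\<Sum>\<alpha>=1..card \<Gamma>. chi pr \<Gamma> \<alpha> z * cnj (chi pr \<Gamma> \<alpha> x))) / of_nat (card \<Gamma>)"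
    unfolding coef_mult_fchi by (simp add: sum_divide_distrib sum_distrib_left sum.swap[of _ \<Gamma>])
  also have "\<dots> = (\<Sum>x\<in>\<Gamma>. if x = z then h z * of_nat (card \<Gamma>) else 0) / of_nat (card \<Gamma>)"
    using chi_dual_orthogonal[OF sg prim \<open>z \<in> \<Gamma>\<close>] by (intro arg_cong2[where f = "(/)"] sum.cong) auto
  also have "\<dots> = h z"
    using \<open>z \<in> \<Gamma>\<close> \<open>card \<Gamma> > 0\<close> by auto
  finally show ?thesis ..
qed

lemma Tform_cong:
  assumes "\<And>y. y \<in> \<Gamma> \<Longrightarrow> a y = a' y" and "\<And>x. x \<in> \<Gamma> \<Longrightarrow> b x = b' x"
  shows "Tform g \<Gamma> a b = Tform g \<Gamma> a' b'"
  unfolding Tform_def using assms by (intro sum.cong) auto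

lemma Tform_sum_left:
  "Tform g \<Gamma> (\<lambda>y. \<Sum>i\<in>I. c i * u i y) b = (\<Sum>i\<in>I. c i * Tform g \<Gamma> (u i) b)"
proof -
  have "Tform g \<Gamma> (\<lambda>y. \<Sum>i\<in>I. c i * u i y) b
      = (\<Sum>x\<in>\<Gamma>. \<Sum>y\<in>\<Gamma>. \<Sum>i\<in>I. c i * (g (x - y) * u i y * cnj (b x)))"
    unfolding Tform_def by (simp add: sum_distrib_left sum_distrib_right mult_ac)
  also have "\<dots> = (\<Sum>i\<in>I. \<Sum>x\<in>\<Gamma>. \<Sum>y\<in>\<Gamma>. c i * (g (x - y) * u i y * cnj (b x)))"
    by (simp only: sum.swap[where B = I])
  finally show ?thesis
    unfolding Tform_def by (simp add: sum_distrib_left)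
qed

lemma Tform_sum_right:
  "Tform g \<Gamma> a (\<lambda>x. \<Sum>j\<in>J. c j * v j x) = (\<Sum>j\<in>J. cnj (c j) * Tform g \<Gamma> a (v j))"
proof -
  have "Tform g \<Gamma> a (\<lambda>x. \<Sum>j\<in>J. c j * v j x)
      = (\<Sum>x\<in>\<Gamma>. \<Sum>y\<in>\<Gamma>. \<Sum>j\<in>J. cnj (c j) * (g (x - y) * a y * cnj (v j x)))"
    unfolding Tform_def by (simp add: sum_distrib_left sum_distrib_right mult_ac)
  also have "\<dots> = (\<Sum>j\<in>J. \<Sum>x\<in>\<Gamma>. \<Sum>y\<in>\<Gamma>. cnj (c j) * (g (x - y) * a y * cnj (v j x)))"
    by (simp only: sum.swap[where B = J])
  finally show ?thesis
    unfolding Tform_def by (simp add: sum_distrib_left)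
qed

lemma dil_fourier_expansion:
  fixes \<Gamma> :: "'a::{field,finite} set"
  assumes sg: "mult_subgroup \<Gamma>" and prim: "primitive_root pr" and "\<gamma> \<in> \<Gamma>" "y \<in> \<Gamma>"
  shows "dil h \<gamma> y = (\<Sum>\<alpha>=1..card \<Gamma>. coef pr \<Gamma> \<alpha> h * chi pr \<Gamma> \<alpha> \<gamma> * fchi pr \<Gamma> \<alpha> y)"
proof -
  have "\<gamma> * y \<in> \<Gamma>"
    using sg assms(3,4) unfolding mult_subgroup_def by blast
  then have "dil h \<gamma> y = (\<Sum>\<alpha>=1..card \<Gamma>. coef pr \<Gamma> \<alpha> h * fchi pr \<Gamma> \<alpha> (\<gamma> * y))"
    unfolding dil_def by (rule fourier_expansion[OF sg prim])
  also have "\<dots> = (\<Sum>\<alpha>=1..card \<Gamma>. coef pr \<Gamma> \<alpha> h * chi pr \<Gamma> \<alpha> \<gamma> * fchi pr \<Gamma> \<alpha> y)"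
    unfolding fchi_def chi_mult[OF sg prim assms(3,4)] by (simp add: mult.assoc)
  finally show ?thesis .
qed

lemma Tform_dil:
  fixes \<Gamma> :: "'a::{field,finite} set"
  assumes sg: "mult_subgroup \<Gamma>" and prim: "primitive_root pr" and "\<gamma> \<in> \<Gamma>"
  shows "Tform g \<Gamma> (dil h1 \<gamma>) (dil h2 \<gamma>)
    = (\<Sum>\<alpha>=1..card \<Gamma>. \<Sum>\<beta>=1..card \<Gamma>.
         coef pr \<Gamma> \<alpha> h1 * cnj (coef pr \<Gamma> \<beta> h2) * (chi pr \<Gamma> \<alpha> \<gamma> * cnj (chi pr \<Gamma> \<beta> \<gamma>))
         * Tform g \<Gamma> (fchi pr \<Gamma> \<alpha>) (fchi pr \<Gamma> \<beta>))"
proof -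
  have "Tform g \<Gamma> (dil h1 \<gamma>) (dil h2 \<gamma>)
    = Tform g \<Gamma> (\<lambda>y. \<Sum>\<alpha>=1..card \<Gamma>. coef pr \<Gamma> \<alpha> h1 * chi pr \<Gamma> \<alpha> \<gamma> * fchi pr \<Gamma> \<alpha> y)
                 (\<lambda>x. \<Sum>\<beta>=1..card \<Gamma>. coef pr \<Gamma> \<beta> h2 * chi pr \<Gamma> \<beta> \<gamma> * fchi pr \<Gamma> \<beta> x)"
    by (intro Tform_cong dil_fourier_expansion[OF sg prim \<open>\<gamma> \<in> \<Gamma>\<close>])
  then show ?thesis
    unfolding Tform_sum_left Tform_sum_right by (simp add: sum_distrib_left mult_ac)
qed

theorem lemma8:
  fixes \<Gamma> :: "'a::{field,finite} set"
    and pr :: 'a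
    and h1 h2 g :: "'a \<Rightarrow> complex"
  assumes "mult_subgroup \<Gamma>"
    and "primitive_root pr"
    and "\<forall>x. x \<notin> \<Gamma> \<longrightarrow> h1 x = 0"
    and "\<forall>x. x \<notin> \<Gamma> \<longrightarrow> h2 x = 0"
  shows "(1 / of_nat (card \<Gamma>)) * (\<Sum>\<gamma>\<in>\<Gamma>. Tform g \<Gamma> (dil h1 \<gamma>) (dil h2 \<gamma>))
       = (\<Sum>\<alpha>=1..card \<Gamma>. coef pr \<Gamma> \<alpha> h1 * cnj (coef pr \<Gamma> \<alpha> h2) * Tform g \<Gamma> (fchi pr \<Gamma> \<alpha>) (fchi pr \<Gamma> \<alpha>))"
proof -
  note sg = assms(1) and prim = assms(2)
  define t where "t = card \<Gamma>"
  define A where "A \<alpha> \<beta> = coef pr \<Gamma> \<alpha> h1 * cnj (coef pr \<Gamma> \<beta> h2)" for \<alpha> \<beta>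
  define T where "T \<alpha> \<beta> = Tform g \<Gamma> (fchi pr \<Gamma> \<alpha>) (fchi pr \<Gamma> \<beta>)" for \<alpha> \<beta>
  have "t > 0"
    using sg unfolding t_def mult_subgroup_def by (auto simp: card_gt_0_iff)
  have "(\<Sum>\<gamma>\<in>\<Gamma>. Tform g \<Gamma> (dil h1 \<gamma>) (dil h2 \<gamma>))
      = (\<Sum>\<alpha>=1..t. \<Sum>\<beta>=1..t. A \<alpha> \<beta> * (\<Sum>\<gamma>\<in>\<Gamma>. chi pr \<Gamma> \<alpha> \<gamma> * cnj (chi pr \<Gamma> \<beta> \<gamma>)) * T \<alpha> \<beta>)"
    unfolding A_def T_def t_def
    by (simp add: Tform_dil[OF sg prim] sum.swap[where A = \<Gamma>] sum_distrib_left sum_distrib_right mult_ac)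
  also have "\<dots> = (\<Sum>\<alpha>=1..t. \<Sum>\<beta>=1..t. if \<alpha> = \<beta> then of_nat t * A \<alpha> \<alpha> * T \<alpha> \<alpha> else 0)"
    using chi_orthogonal[OF sg prim] unfolding t_def by (intro sum.cong) auto
  also have "\<dots> = of_nat t * (\<Sum>\<alpha>=1..t. A \<alpha> \<alpha> * T \<alpha> \<alpha>)"
    by (simp add: sum_distrib_left mult.assoc)
  finally show ?thesis
    using \<open>t > 0\<close> unfolding A_def T_def t_def by simp
qed

end
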